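(* There exists a $5\times 5$ pandiagonal magic square $A$ whose twenty-five entries are pairwise distinct strings of length $4$ over $\{0,1,2\}$ (read as decimal numbers, leading zeros allowed), with magic sum $S1=5555$, such that the rotated array $R(A)$ is also a magic square with magic sum $5555$.
   Context: A magic square of order $n$ is an $n\times n$ array of numbers in which the sums of the entries of each row, of each column and of each of the two principal diagonals all equal a common value $S1$ (the magic sum). It is pandiagonal if moreover all $2n$ broken diagonals (the sets $\{(i,j): j-i\equiv c \pmod n\}$ and $\{(i,j): i+j\equiv c\pmod n\}$) have sum $S1$. For an $n\times n$ array $A$ whose entries are digit strings $d_1d_2\cdots d_k$ over $\{0,1,2\}$, the rotated array $R(A)$ is defined by $R(A)_{i,j}=\overline{A_{n+1-i,\,n+1-j}}$, where $\overline{d_1\cdots d_k}=d_k\cdots d_1$. Strings are interpreted as decimal integers. *)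

theory Defs
  imports Main
begin

(* Digit strings are lists of digits d1 d2 ... dk (most significant first). *)
definition dec_val :: "nat list \<Rightarrow> nat" where
  "dec_val ds = foldl (\<lambda>acc d. 10 * acc + d) 0 ds"

(* n x n arrays, indices 0..n-1 (the paper uses 1..n). *)
definition magic_square :: "nat \<Rightarrow> (nat \<Rightarrow> nat \<Rightarrow> nat) \<Rightarrow> nat \<Rightarrow> bool" where
  "magic_square n M S \<longleftrightarrow>
     (\<forall>i<n. (\<Sum>j<n. M i j) = S) \<and>
     (\<forall>j<n. (\<Sum>i<n. M i j) = S) \<and>
     (\<Sum>i<n. M i i) = S \<and>
     (\<Sum>i<n. M i (n - 1 - i)) = S"

(* broken diagonals {(i,j): j-i = c mod n} and {(i,j): i+j = c mod n} *)
definition pandiagonal_magic :: "nat \<Rightarrow> (nat \<Rightarrow> nat \<Rightarrow> nat) \<Rightarrow> nat \<Rightarrow> bool" where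
  "pandiagonal_magic n M S \<longleftrightarrow> magic_square n M S \<and>
     (\<forall>c<n. (\<Sum>i<n. M i ((i + c) mod n)) = S) \<and>
     (\<forall>c<n. (\<Sum>i<n. M i ((c + n - i) mod n)) = S)"

(* R(A)_{i,j} = reverse of A_{n+1-i, n+1-j}, in 0-based indexing *)
definition rotate_arr :: "nat \<Rightarrow> (nat \<Rightarrow> nat \<Rightarrow> 'a list) \<Rightarrow> nat \<Rightarrow> nat \<Rightarrow> 'a list" where
  "rotate_arr n A i j = rev (A (n - 1 - i) (n - 1 - j))"

end

theory Submission
  imports Defs
begin

(*
  The square is built digit by digit.  Reading a 4-digit string positionally,
  dec_val (A i j) = sum over k<4 of 10^(3-k) * (A i j ! k), so the array of
  decimal values is a linear combination of its four "digit layers"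
  (k-th digits of all entries).  Magic and pandiagonal squares are closed under
  sums and scalar multiples, so if every digit layer is pandiagonal magic with
  line sum 5, the decimal square is pandiagonal magic with sum 5555.
  The rotation R reverses every string and reflects the array through its
  centre: digit layer k of R(A) is layer 3-k of A, reflected.  A point
  reflection maps rows to rows, columns to columns and each principal diagonal
  to itself, hence preserves magic squares, and R(A) is magic with sum 5555 too.
*)

lemma magic_square_cong:
  assumes "magic_square n M S" and "\<And>i j. i < n \<Longrightarrow> j < n \<Longrightarrow> M i j = N i j"
  shows "magic_square n N S"
proof -
  have "(\<Sum>i<n. M i (n - 1 - i)) = (\<Sum>i<n. N i (n - 1 - i))"
    by (intro sum.cong) (auto simp: assms(2))
  with assms show ?thesis
    unfolding magic_square_def by (auto intro!: sum.cong)
qed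

lemma pandiagonal_magic_cong:
  assumes "pandiagonal_magic n M S" and "\<And>i j. i < n \<Longrightarrow> j < n \<Longrightarrow> M i j = N i j"
  shows "pandiagonal_magic n N S"
proof -
  have "0 < n \<Longrightarrow> (\<Sum>i<n. M i ((i + c) mod n)) = (\<Sum>i<n. N i ((i + c) mod n))"
    and "0 < n \<Longrightarrow> (\<Sum>i<n. M i ((c + n - i) mod n)) = (\<Sum>i<n. N i ((c + n - i) mod n))" for c
    by (auto intro!: sum.cong simp: assms(2))
  with assms show ?thesis
    unfolding pandiagonal_magic_def by (auto intro: magic_square_cong)
qed

lemma magic_square_sum:
  assumes "\<And>k. k \<in> K \<Longrightarrow> magic_square n (M k) (S k)"
  shows "magic_square n (\<lambda>i j. \<Sum>k\<in>K. M k i j) (\<Sum>k\<in>K. S k)"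
  using assms unfolding magic_square_def
  by (auto simp: sum.swap[of _ K] intro!: sum.cong)

lemma pandiagonal_magic_sum:
  assumes "\<And>k. k \<in> K \<Longrightarrow> pandiagonal_magic n (M k) (S k)"
  shows "pandiagonal_magic n (\<lambda>i j. \<Sum>k\<in>K. M k i j) (\<Sum>k\<in>K. S k)"
  using assms magic_square_sum[of K n M S] unfolding pandiagonal_magic_def
  by (auto simp: sum.swap[of _ K] intro!: sum.cong)

lemma magic_square_scale:
  assumes "magic_square n M S"
  shows "magic_square n (\<lambda>i j. c * M i j) (c * S)"
  using assms unfolding magic_square_def by (simp add: sum_distrib_left[symmetric])

lemma pandiagonal_magic_scale:
  assumes "pandiagonal_magic n M S"
  shows "pandiagonal_magic n (\<lambda>i j. c * M i j) (c * S)"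
  using assms magic_square_scale unfolding pandiagonal_magic_def
  by (simp add: sum_distrib_left[symmetric])

text \<open>Reflecting through the centre permutes the rows, the columns, and maps each
  principal diagonal onto itself, so it preserves magic squares.\<close>
lemma magic_square_point_reflection:
  assumes "magic_square n M S"
  shows "magic_square n (\<lambda>i j. M (n - 1 - i) (n - 1 - j)) S"
proof -
  have rows: "(\<Sum>j<n. M (n - 1 - i) (n - 1 - j)) = S" if "i < n" for i
    using assms that unfolding magic_square_def by (simp add: sum.nat_diff_reindex)
  have cols: "(\<Sum>i<n. M (n - 1 - i) (n - 1 - j)) = S" if "j < n" for j
    using assms that unfolding magic_square_def
    by (simp add: sum.nat_diff_reindex[of "\<lambda>i. M i (n - Suc j)"])
  have diag: "(\<Sum>i<n. M (n - 1 - i) (n - 1 - i)) = S"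
    using assms unfolding magic_square_def by (simp add: sum.nat_diff_reindex[of "\<lambda>i. M i i"])
  have "(\<Sum>i<n. M (n - 1 - i) (n - 1 - (n - 1 - i))) = (\<Sum>i<n. M (n - 1 - i) i)"
    by (intro sum.cong) auto
  also have "\<dots> = (\<Sum>i<n. M i (n - 1 - i))"
    using sum.nat_diff_reindex[of "\<lambda>i. M i (n - 1 - i)" n] by (simp add: Suc_diff_Suc)
  finally have antidiag: "(\<Sum>i<n. M (n - 1 - i) (n - 1 - (n - 1 - i))) = S"
    using assms unfolding magic_square_def by simp
  show ?thesis
    unfolding magic_square_def using rows cols diag antidiag by simp
qed

lemma dec_val_snoc: "dec_val (ds @ [d]) = 10 * dec_val ds + d"
  by (simp add: dec_val_def)

lemma dec_val_positional:
  "dec_val ds = (\<Sum>k<length ds. 10 ^ (length ds - 1 - k) * ds ! k)"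
proof (induction ds rule: rev_induct)
  case Nil
  then show ?case by (simp add: dec_val_def)
next
  case (snoc d ds)
  let ?m = "length ds"
  have "(\<Sum>k<Suc ?m. 10 ^ (?m - k) * (ds @ [d]) ! k)
        = (\<Sum>k<?m. 10 ^ (?m - k) * ds ! k) + d"
    by (simp add: nth_append)
  also have "(\<Sum>k<?m. 10 ^ (?m - k) * ds ! k) = 10 * (\<Sum>k<?m. 10 ^ (?m - 1 - k) * ds ! k)"
    unfolding sum_distrib_left
    by (intro sum.cong) (auto simp: Suc_diff_Suc simp flip: power_Suc)
  finally show ?case
    using snoc.IH by (simp add: dec_val_snoc)
qed

definition digit_layer :: "(nat \<Rightarrow> nat \<Rightarrow> nat list) \<Rightarrow> nat \<Rightarrow> nat \<Rightarrow> nat \<Rightarrow> nat" where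
  "digit_layer A k i j = A i j ! k"

lemma dec_val_as_layer_sum:
  assumes "length (A i j) = m"
  shows "dec_val (A i j) = (\<Sum>k<m. 10 ^ (m - 1 - k) * digit_layer A k i j)"
  using assms dec_val_positional[of "A i j"] by (simp add: digit_layer_def)

lemma pandiagonal_magic_dec_val:
  assumes "\<And>i j. i < n \<Longrightarrow> j < n \<Longrightarrow> length (A i j) = m"
    and "\<And>k. k < m \<Longrightarrow> pandiagonal_magic n (digit_layer A k) (s k)"
  shows "pandiagonal_magic n (\<lambda>i j. dec_val (A i j)) (\<Sum>k<m. 10 ^ (m - 1 - k) * s k)"
proof (rule pandiagonal_magic_cong)
  show "pandiagonal_magic n (\<lambda>i j. \<Sum>k<m. 10 ^ (m - 1 - k) * digit_layer A k i j)
          (\<Sum>k<m. 10 ^ (m - 1 - k) * s k)"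
    using assms(2) by (intro pandiagonal_magic_sum pandiagonal_magic_scale) simp
qed (simp add: assms(1) dec_val_as_layer_sum)

lemma magic_square_dec_val:
  assumes "\<And>i j. i < n \<Longrightarrow> j < n \<Longrightarrow> length (A i j) = m"
    and "\<And>k. k < m \<Longrightarrow> magic_square n (digit_layer A k) (s k)"
  shows "magic_square n (\<lambda>i j. dec_val (A i j)) (\<Sum>k<m. 10 ^ (m - 1 - k) * s k)"
proof (rule magic_square_cong)
  show "magic_square n (\<lambda>i j. \<Sum>k<m. 10 ^ (m - 1 - k) * digit_layer A k i j)
          (\<Sum>k<m. 10 ^ (m - 1 - k) * s k)"
    using assms(2) by (intro magic_square_sum magic_square_scale) simp
qed (simp add: assms(1) dec_val_as_layer_sum)

lemma digit_layer_rotate_arr: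
  assumes "length (A (n - 1 - i) (n - 1 - j)) = m" and "k < m"
  shows "digit_layer (rotate_arr n A) k i j = digit_layer A (m - 1 - k) (n - 1 - i) (n - 1 - j)"
  using assms by (simp add: digit_layer_def rotate_arr_def rev_nth)

lemma magic_square_rotate_arr_dec_val:
  assumes "\<And>i j. i < n \<Longrightarrow> j < n \<Longrightarrow> length (A i j) = m"
    and "\<And>k. k < m \<Longrightarrow> magic_square n (digit_layer A k) s"
  shows "magic_square n (\<lambda>i j. dec_val (rotate_arr n A i j)) (\<Sum>k<m. 10 ^ (m - 1 - k) * s)"
proof (rule magic_square_dec_val)
  show "length (rotate_arr n A i j) = m" if "i < n" "j < n" for i j
    using assms(1) that by (simp add: rotate_arr_def)
  show "magic_square n (digit_layer (rotate_arr n A) k) s" if "k < m" for k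
  proof (rule magic_square_cong)
    show "magic_square n (\<lambda>i j. digit_layer A (m - 1 - k) (n - 1 - i) (n - 1 - j)) s"
      using assms(2) that by (intro magic_square_point_reflection) simp
  qed (simp add: assms(1) that digit_layer_rotate_arr)
qed

definition square :: "nat \<Rightarrow> nat \<Rightarrow> nat list" where
  "square i j =
     [[[0,2,1,1], [0,1,2,0], [2,1,0,0], [2,1,1,2], [1,0,1,2]],
      [[2,1,0,2], [1,1,1,2], [0,0,1,1], [0,2,1,0], [2,1,2,0]],
      [[0,0,1,0], [2,2,1,0], [2,1,2,2], [1,1,0,2], [0,1,1,1]],
      [[1,1,2,2], [0,1,0,1], [0,1,1,0], [2,0,1,0], [2,2,1,2]],
      [[2,1,1,0], [2,0,1,2], [1,2,1,2], [0,1,2,1], [0,1,0,0]]] ! i ! j"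

lemma all_less_5: "(\<forall>i<(5::nat). P i) \<longleftrightarrow> P 0 \<and> P 1 \<and> P 2 \<and> P 3 \<and> P 4"
  by (auto simp: less_Suc_eq numeral_eq_Suc)

lemma sum_less_5: "(\<Sum>i<(5::nat). f i) = f 0 + f 1 + f 2 + f 3 + (f 4 :: nat)"
  by (simp add: numeral_eq_Suc)

lemma square_entries:
  "\<forall>i<5. \<forall>j<5. length (square i j) = 4 \<and> set (square i j) \<subseteq> {0, 1, 2}"
  by (simp add: all_less_5 square_def)

lemma square_distinct:
  "\<forall>i<5. \<forall>j<5. \<forall>k<5. \<forall>l<5. square i j = square k l \<longrightarrow> (i, j) = (k, l)"
  by (simp add: all_less_5 square_def)

lemma square_layers_pandiagonal:
  assumes "k < 4"
  shows "pandiagonal_magic 5 (digit_layer square k) 5"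
proof -
  have "k = 0 \<or> k = 1 \<or> k = 2 \<or> k = 3"
    using assms by auto
  then show ?thesis
    unfolding pandiagonal_magic_def magic_square_def all_less_5 sum_less_5
    by (auto simp: digit_layer_def square_def)
qed

theorem mainTheorem3:
  shows "\<exists>A :: nat \<Rightarrow> nat \<Rightarrow> nat list.
    (\<forall>i<5. \<forall>j<5. length (A i j) = 4 \<and> set (A i j) \<subseteq> {0, 1, 2}) \<and>
    (\<forall>i<5. \<forall>j<5. \<forall>k<5. \<forall>l<5. A i j = A k l \<longrightarrow> (i, j) = (k, l)) \<and>
    pandiagonal_magic 5 (\<lambda>i j. dec_val (A i j)) 5555 \<and>
    magic_square 5 (\<lambda>i j. dec_val (rotate_arr 5 A i j)) 5555"
proof (intro exI conjI)
  have lengths: "\<And>i j. i < 5 \<Longrightarrow> j < 5 \<Longrightarrow> length (square i j) = 4"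
    using square_entries by blast
  have weighted_sum: "(\<Sum>k<4. 10 ^ (4 - 1 - k) * 5) = (5555 :: nat)"
    by (simp add: numeral_eq_Suc)
  show "pandiagonal_magic 5 (\<lambda>i j. dec_val (square i j)) 5555"
    using pandiagonal_magic_dec_val[OF lengths square_layers_pandiagonal] weighted_sum by simp
  show "magic_square 5 (\<lambda>i j. dec_val (rotate_arr 5 square i j)) 5555"
  proof -
    have "magic_square 5 (digit_layer square k) 5" if "k < 4" for k
      using square_layers_pandiagonal[OF that] by (simp add: pandiagonal_magic_def)
    then show ?thesis
      using magic_square_rotate_arr_dec_val[of 5 square 4 5] lengths weighted_sum by simp
  qed
qed (use square_entries square_distinct in auto)

end
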